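(* Let $L$ be a non-abelian finite group. Then every non-abelian subgroup $H$ of $L$ satisfies $C_L(H)\le H$ if and only if every maximal subgroup $M$ of $L$ has the property that each non-abelian subgroup $H$ of $M$ satisfies $C_M(H)\le H$, and $Z(L)\le\Phi(L)$.
   Context: $C_L(H)$ denotes the centralizer, $Z(L)$ the center and $\Phi(L)$ the Frattini subgroup of $L$. *)

theory Defs
  imports "HOL-Algebra.Algebra"
begin

definition centralizer_in :: "('a, 'b) monoid_scheme \<Rightarrow> 'a set \<Rightarrow> 'a set \<Rightarrow> 'a set" where
  "centralizer_in G K H = {x \<in> K. \<forall>h \<in> H. x \<otimes>\<^bsub>G\<^esub> h = h \<otimes>\<^bsub>G\<^esub> x}"

definition group_center :: "('a, 'b) monoid_scheme \<Rightarrow> 'a set" where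
  "group_center G = centralizer_in G (carrier G) (carrier G)"

definition abelian_set :: "('a, 'b) monoid_scheme \<Rightarrow> 'a set \<Rightarrow> bool" where
  "abelian_set G H \<longleftrightarrow> (\<forall>x \<in> H. \<forall>y \<in> H. x \<otimes>\<^bsub>G\<^esub> y = y \<otimes>\<^bsub>G\<^esub> x)"

definition maximal_subgroup :: "'a set \<Rightarrow> ('a, 'b) monoid_scheme \<Rightarrow> bool" where
  "maximal_subgroup M G \<longleftrightarrow> subgroup M G \<and> M \<noteq> carrier G \<and>
     (\<forall>K. subgroup K G \<and> M \<subseteq> K \<longrightarrow> K = M \<or> K = carrier G)"

text \<open>Frattini subgroup: intersection of all maximal subgroups (the whole group if none).\<close>
definition frattini :: "('a, 'b) monoid_scheme \<Rightarrow> 'a set" where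
  "frattini G = carrier G \<inter> \<Inter> {M. maximal_subgroup M G}"

definition CH_property :: "('a, 'b) monoid_scheme \<Rightarrow> bool" where
  "CH_property G \<longleftrightarrow> (\<forall>H. subgroup H G \<and> \<not> abelian_set G H \<longrightarrow>
       centralizer_in G (carrier G) H \<subseteq> H)"

end

theory Submission
  imports Defs
begin

text \<open>
  Forward direction: a non-abelian subgroup of a maximal subgroup M is a non-abelian subgroup
  of L, and C_M(H) \<subseteq> C_L(H).  A central element z outside a maximal subgroup M lies in C_L(M),
  so M must be abelian; then M \<subseteq> Z(L) and maximality forces Z(L) = L, contradicting that L
  is non-abelian.

  Backward direction: let H be non-abelian and x \<in> C_L(H).  If \<langle>x, H\<rangle> lies in some maximal
  subgroup M, the property of M gives x \<in> H.  Otherwise \<langle>x, H\<rangle> = L, so x is central, hence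
  in \<Phi>(L), hence in any maximal subgroup containing H, and we are back in the first case.
\<close>

lemma abelian_set_carrier_update [simp]:
  "abelian_set (G\<lparr>carrier := M\<rparr>) H = abelian_set G H"
  by (simp add: abelian_set_def)

lemma centralizer_in_carrier_update [simp]:
  "centralizer_in (G\<lparr>carrier := M\<rparr>) K H = centralizer_in G K H"
  by (simp add: centralizer_in_def)

lemma centralizer_in_mono: "K \<subseteq> K' \<Longrightarrow> centralizer_in G K H \<subseteq> centralizer_in G K' H"
  by (auto simp: centralizer_in_def)

lemma (in group) subgroup_centralizer_in:
  assumes "S \<subseteq> carrier G"
  shows "subgroup (centralizer_in G (carrier G) S) G"
proof (rule subgroupI)
  show "centralizer_in G (carrier G) S \<subseteq> carrier G"
    by (auto simp: centralizer_in_def)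
  show "centralizer_in G (carrier G) S \<noteq> {}"
    using assms by (auto simp: centralizer_in_def intro!: exI[of _ \<one>])
next
  fix a assume a: "a \<in> centralizer_in G (carrier G) S"
  show "inv a \<in> centralizer_in G (carrier G) S"
    unfolding centralizer_in_def
  proof (intro CollectI conjI ballI)
    show "inv a \<in> carrier G" using a by (auto simp: centralizer_in_def)
    fix h assume h: "h \<in> S"
    have ac: "a \<in> carrier G" and hc: "h \<in> carrier G" and ah: "a \<otimes> h = h \<otimes> a"
      using a h assms by (auto simp: centralizer_in_def)
    have "inv a \<otimes> h = inv a \<otimes> (h \<otimes> a) \<otimes> inv a"
      using ac hc by (simp add: m_assoc)
    also have "\<dots> = inv a \<otimes> (a \<otimes> h) \<otimes> inv a" by (simp add: ah)
    also have "\<dots> = h \<otimes> inv a" using ac hc by (simp add: m_assoc[symmetric])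
    finally show "inv a \<otimes> h = h \<otimes> inv a" .
  qed
next
  fix a b assume a: "a \<in> centralizer_in G (carrier G) S" and b: "b \<in> centralizer_in G (carrier G) S"
  show "a \<otimes> b \<in> centralizer_in G (carrier G) S"
    unfolding centralizer_in_def
  proof (intro CollectI conjI ballI)
    have ac: "a \<in> carrier G" and bc: "b \<in> carrier G"
      using a b by (auto simp: centralizer_in_def)
    then show "a \<otimes> b \<in> carrier G" by simp
    fix h assume h: "h \<in> S"
    have hc: "h \<in> carrier G" and ah: "a \<otimes> h = h \<otimes> a" and bh: "b \<otimes> h = h \<otimes> b"
      using a b h assms by (auto simp: centralizer_in_def)
    have "a \<otimes> b \<otimes> h = a \<otimes> h \<otimes> b" using ac bc hc by (simp add: bh m_assoc)
    also have "\<dots> = h \<otimes> (a \<otimes> b)" using ac bc hc by (simp add: ah m_assoc)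
    finally show "a \<otimes> b \<otimes> h = h \<otimes> (a \<otimes> b)" .
  qed
qed

lemma (in group) subgroup_center: "subgroup (group_center G) G"
  unfolding group_center_def by (rule subgroup_centralizer_in) simp

lemma (in group) center_eq_carrier_imp_comm_group:
  assumes "group_center G = carrier G"
  shows "comm_group G"
  using assms by (intro group_comm_groupI) (auto simp: group_center_def centralizer_in_def)

lemma (in group) generate_insert_subset_centralizer:
  assumes "x \<in> centralizer_in G (carrier G) H" and "H \<subseteq> carrier G"
  shows "generate G (insert x H) \<subseteq> centralizer_in G (carrier G) {x}"
proof (rule generate_subgroup_incl)
  show "insert x H \<subseteq> centralizer_in G (carrier G) {x}"
    using assms by (auto simp: centralizer_in_def)
  show "subgroup (centralizer_in G (carrier G) {x}) G"
    using assms by (intro subgroup_centralizer_in) (auto simp: centralizer_in_def)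
qed

lemma maximal_subgroup_imp_subgroup: "maximal_subgroup M G \<Longrightarrow> subgroup M G"
  by (simp add: maximal_subgroup_def)

lemma maximal_subgroupD:
  assumes "maximal_subgroup M G" and "subgroup K G" and "M \<subseteq> K"
  shows "K = M \<or> K = carrier G"
  using assms unfolding maximal_subgroup_def by blast

lemma (in group) exists_maximal_subgroup_superset:
  assumes "finite (carrier G)" and "subgroup H G" and "H \<noteq> carrier G"
  obtains M where "maximal_subgroup M G" and "H \<subseteq> M"
proof -
  let ?S = "{K. subgroup K G \<and> H \<subseteq> K \<and> K \<noteq> carrier G}"
  have "finite ?S"
    by (rule finite_subset[of _ "Pow (carrier G)"]) (auto dest: subgroup.subset simp: assms(1))
  moreover have "?S \<noteq> {}" using assms(2,3) by blast
  ultimately have "\<exists>M \<in> ?S. \<forall>K \<in> ?S. M \<subseteq> K \<longrightarrow> M = K"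
    by (rule finite_has_maximal)
  then obtain M where M: "M \<in> ?S" and top: "\<forall>K \<in> ?S. M \<subseteq> K \<longrightarrow> M = K" ..
  have "maximal_subgroup M G"
    unfolding maximal_subgroup_def
  proof (intro conjI allI impI)
    show "subgroup M G" and "M \<noteq> carrier G" using M by simp_all
    fix K assume "subgroup K G \<and> M \<subseteq> K"
    then show "K = M \<or> K = carrier G" using M top by blast
  qed
  with M that show ?thesis by blast
qed

lemma (in group) CH_property_subgroup:
  assumes "CH_property G" and "subgroup M G"
  shows "CH_property (G\<lparr>carrier := M\<rparr>)"
  unfolding CH_property_def
proof (intro allI impI)
  fix H assume H: "subgroup H (G\<lparr>carrier := M\<rparr>) \<and> \<not> abelian_set (G\<lparr>carrier := M\<rparr>) H"
  then have "centralizer_in G (carrier G) H \<subseteq> H"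
    using assms(1) incl_subgroup[OF assms(2)] unfolding CH_property_def by simp
  moreover have "centralizer_in G M H \<subseteq> centralizer_in G (carrier G) H"
    by (rule centralizer_in_mono[OF subgroup.subset[OF assms(2)]])
  ultimately show "centralizer_in (G\<lparr>carrier := M\<rparr>) (carrier (G\<lparr>carrier := M\<rparr>)) H \<subseteq> H"
    by simp
qed

lemma (in group) center_subset_abelian_maximal_subgroup:
  assumes max: "maximal_subgroup M G" and "abelian_set G M" and "\<not> comm_group G"
  shows "group_center G \<subseteq> M"
proof (rule ccontr)
  assume "\<not> group_center G \<subseteq> M"
  then obtain z where z: "z \<in> group_center G" "z \<notin> M" by blast
  let ?C = "centralizer_in G (carrier G) M"
  have MG: "M \<subseteq> carrier G"
    using subgroup.subset[OF maximal_subgroup_imp_subgroup[OF max]] .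
  have "M \<subseteq> ?C" and "z \<in> ?C"
    using assms(2) z(1) MG by (auto simp: abelian_set_def centralizer_in_def group_center_def)
  then have "?C = carrier G"
    using maximal_subgroupD[OF max subgroup_centralizer_in[OF MG]] z(2) by blast
  then have "M \<subseteq> group_center G"
    using MG unfolding group_center_def centralizer_in_def by force
  then have "group_center G = carrier G"
    using maximal_subgroupD[OF max subgroup_center] z by blast
  then show False
    using assms(3) center_eq_carrier_imp_comm_group by blast
qed

lemma (in group) CH_property_imp_center_subset_frattini:
  assumes "CH_property G" and "\<not> comm_group G"
  shows "group_center G \<subseteq> frattini G"
  unfolding frattini_def
proof (intro Int_greatest Inter_greatest)
  show "group_center G \<subseteq> carrier G"
    by (auto simp: group_center_def centralizer_in_def)
  fix M assume "M \<in> {M. maximal_subgroup M G}"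
  then have M: "maximal_subgroup M G" "subgroup M G" "M \<subseteq> carrier G"
    using maximal_subgroup_imp_subgroup subgroup.subset by blast+
  show "group_center G \<subseteq> M"
  proof (cases "abelian_set G M")
    case True
    with M(1) assms(2) show ?thesis by (intro center_subset_abelian_maximal_subgroup)
  next
    case False
    then have "centralizer_in G (carrier G) M \<subseteq> M"
      using assms(1) M(2) unfolding CH_property_def by blast
    moreover have "group_center G \<subseteq> centralizer_in G (carrier G) M"
      using M(3) by (auto simp: group_center_def centralizer_in_def)
    ultimately show ?thesis by blast
  qed
qed

lemma (in group) CH_property_if_maximal_subgroups:
  assumes fin: "finite (carrier G)"
    and max: "\<And>M. maximal_subgroup M G \<Longrightarrow> CH_property (G\<lparr>carrier := M\<rparr>)"
    and center: "group_center G \<subseteq> frattini G"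
  shows "CH_property G"
  unfolding CH_property_def
proof (intro allI impI subsetI)
  fix H x assume "subgroup H G \<and> \<not> abelian_set G H"
    and x: "x \<in> centralizer_in G (carrier G) H"
  then have H: "subgroup H G" "\<not> abelian_set G H" by simp_all
  have HG: "H \<subseteq> carrier G" and xG: "x \<in> carrier G"
    using H(1) x by (auto simp: centralizer_in_def dest: subgroup.subset)
  let ?K = "generate G (insert x H)"
  have K: "subgroup ?K G"
    using HG xG by (intro generate_is_subgroup) simp
  have xHK: "insert x H \<subseteq> ?K"
    by (rule subsetI) (rule generate.incl)
  have in_H_if_maximal: "x \<in> H" if M: "maximal_subgroup M G" and "?K \<subseteq> M" for M
  proof -
    have "insert x H \<subseteq> M" using xHK \<open>?K \<subseteq> M\<close> by (rule subset_trans)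
    then have "subgroup H (G\<lparr>carrier := M\<rparr>)" and "x \<in> centralizer_in G M H"
      using subgroup_incl[OF H(1) maximal_subgroup_imp_subgroup[OF M]] x
      by (auto simp: centralizer_in_def)
    with max[OF M] H(2) show "x \<in> H"
      unfolding CH_property_def by auto
  qed
  show "x \<in> H"
  proof (cases "?K = carrier G")
    case False
    obtain M where "maximal_subgroup M G" and "?K \<subseteq> M"
      by (rule exists_maximal_subgroup_superset[OF fin K False])
    then show ?thesis by (rule in_H_if_maximal)
  next
    case True
    then have "x \<in> group_center G"
      using generate_insert_subset_centralizer[OF x HG] xG
      by (auto simp: group_center_def centralizer_in_def)
    then have xF: "x \<in> frattini G" using center by blast
    show ?thesis
    proof (cases "H = carrier G")
      case False
      obtain M where M: "maximal_subgroup M G" and "H \<subseteq> M"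
        by (rule exists_maximal_subgroup_superset[OF fin H(1) False])
      moreover have "x \<in> M" using xF M by (simp add: frattini_def)
      ultimately have "?K \<subseteq> M"
        using maximal_subgroup_imp_subgroup[OF M] by (intro generate_subgroup_incl) auto
      with M show ?thesis by (rule in_H_if_maximal)
    qed (simp add: xG)
  qed
qed

theorem corollary6p3:
  fixes L :: "('a, 'b) monoid_scheme"
  assumes "group L" and "finite (carrier L)" and "\<not> comm_group L"
  shows "CH_property L \<longleftrightarrow>
    ((\<forall>M. maximal_subgroup M L \<longrightarrow> CH_property (L\<lparr>carrier := M\<rparr>))
     \<and> group_center L \<subseteq> frattini L)"
proof -
  interpret group L by (rule assms(1))
  show ?thesis
  proof (intro iffI conjI allI impI)
    fix M assume "CH_property L" and "maximal_subgroup M L"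
    then show "CH_property (L\<lparr>carrier := M\<rparr>)"
      by (intro CH_property_subgroup[OF \<open>CH_property L\<close>] maximal_subgroup_imp_subgroup)
  next
    assume "CH_property L"
    then show "group_center L \<subseteq> frattini L"
      using assms(3) by (rule CH_property_imp_center_subset_frattini)
  next
    assume "(\<forall>M. maximal_subgroup M L \<longrightarrow> CH_property (L\<lparr>carrier := M\<rparr>))
            \<and> group_center L \<subseteq> frattini L"
    then show "CH_property L"
      using CH_property_if_maximal_subgroups[OF assms(2)] by blast
  qed
qed

end
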